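(* Let $K$ be a field of characteristic $0$, $e\ge 2$, $A,B,C\in M_e(K)$ and $d_1,d_2\in(\mathbb{Z}/e\mathbb{Z})^\times$. Then \[ A\overset{d_1}{\ast}(B\overset{d_2}{\ast}C)=(A\overset{-d_2^{-1}d_1}{\ast}B)\overset{d_2}{\ast}C. \] In particular $A\overset{d_1}{\ast}(B\overset{-1}{\ast}C)=(A\overset{d_1}{\ast}B)\overset{-1}{\ast}C$, and hence the $(-1)$-composition $\overset{-1}{\ast}$ is associative.
   Context: For $A=[a_{i,j}],B=[b_{i,j}]\in M_e(K)$ (indices modulo $e$) and $d\in(\mathbb{Z}/e\mathbb{Z})\setminus\{0\}$, the $d$-composition is $A\overset{d}{\ast}B=\big[\sum_{s=0}^{e-1}\sum_{t=0}^{e-1}a_{s,t}b_{ds+i,dt+j}\big]_{0\le i,j\le e-1}$. *)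

theory Defs
  imports "HOL-Number_Theory.Number_Theory"
begin

text \<open>An e x e matrix over K is represented by a function nat => nat => K,
  of which only the entries with indices < e are relevant.\<close>

definition dcomp :: "nat \<Rightarrow> int \<Rightarrow> (nat \<Rightarrow> nat \<Rightarrow> 'a::comm_ring_1)
    \<Rightarrow> (nat \<Rightarrow> nat \<Rightarrow> 'a) \<Rightarrow> (nat \<Rightarrow> nat \<Rightarrow> 'a)" where
  "dcomp e d A B = (\<lambda>i j. \<Sum>s<e. \<Sum>t<e.
      A s t * B (nat ((d * int s + int i) mod int e)) (nat ((d * int t + int j) mod int e)))"

definition mat_eq :: "nat \<Rightarrow> (nat \<Rightarrow> nat \<Rightarrow> 'a) \<Rightarrow> (nat \<Rightarrow> nat \<Rightarrow> 'a) \<Rightarrow> bool" where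
  "mat_eq e X Y \<longleftrightarrow> (\<forall>i<e. \<forall>j<e. X i j = Y i j)"

end

theory Submission
  imports Defs
begin

(* Expanding entry (i,j) of both sides gives a sum over s, t of A s t times a double sum of
   products of entries of B and C. On the right the B-indices are d s + p and d t + q with
   d = -d2inv d1; translating p and q by d s and d t (bijections of Z/eZ) matches the
   left-hand side, since d2 d = -d1 modulo e. *)

definition residue :: "nat \<Rightarrow> int \<Rightarrow> nat" where
  "residue e x = nat (x mod int e)"

lemma dcomp_eq_residue:
  "dcomp e d A B i j =
     (\<Sum>s<e. \<Sum>t<e. A s t * B (residue e (d * int s + int i)) (residue e (d * int t + int j)))"
  by (simp add: dcomp_def residue_def)

lemma int_residue: "e > 0 \<Longrightarrow> int (residue e x) = x mod int e"
  by (simp add: residue_def)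

lemma residue_less: "e > 0 \<Longrightarrow> residue e x < e"
  by (simp add: residue_def nat_less_iff)

lemma residue_of_nat: "n < e \<Longrightarrow> residue e (int n) = n"
  by (simp add: residue_def)

lemma residue_cong: "[x = y] (mod int e) \<Longrightarrow> residue e x = residue e y"
  by (simp add: residue_def cong_def)

lemma cong_int_residue: "e > 0 \<Longrightarrow> [int (residue e x) = x] (mod int e)"
  by (simp add: int_residue cong_def)

lemma bij_betw_residue_shift:
  assumes "e > 0"
  shows "bij_betw (\<lambda>p. residue e (c + int p)) {..<e} {..<e}"
proof (rule bij_betw_byWitness[where f' = "\<lambda>u. residue e (int u - c)"])
  show "\<forall>p\<in>{..<e}. residue e (int (residue e (c + int p)) - c) = p"
  proof
    fix p assume "p \<in> {..<e}"
    have "[int (residue e (c + int p)) - c = int p] (mod int e)"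
      using cong_diff[OF cong_int_residue[OF assms, of "c + int p"] cong_refl, of c] by simp
    then show "residue e (int (residue e (c + int p)) - c) = p"
      using \<open>p \<in> {..<e}\<close> by (simp add: residue_cong residue_of_nat)
  qed
  show "\<forall>u\<in>{..<e}. residue e (c + int (residue e (int u - c))) = u"
  proof
    fix u assume "u \<in> {..<e}"
    have "[c + int (residue e (int u - c)) = int u] (mod int e)"
      using cong_add[OF cong_refl cong_int_residue[OF assms, of "int u - c"], of c] by simp
    then show "residue e (c + int (residue e (int u - c))) = u"
      using \<open>u \<in> {..<e}\<close> by (simp add: residue_cong residue_of_nat)
  qed
qed (use residue_less[OF assms] in auto)

lemma sum_residue_shift:
  "e > 0 \<Longrightarrow> (\<Sum>p<e. f (residue e (c + int p))) = (\<Sum>u<e. f u)"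
  using sum.reindex_bij_betw[OF bij_betw_residue_shift] by blast

lemma sum_residue_shift2:
  assumes "e > 0"
  shows "(\<Sum>p<e. \<Sum>q<e. f (residue e (a + int p)) (residue e (b + int q))) = (\<Sum>u<e. \<Sum>v<e. f u v)"
  using sum_residue_shift[OF assms, of "\<lambda>u. \<Sum>v<e. f u v" a]
  by (simp add: sum_residue_shift[OF assms, of "f _" b])

lemma residue_add_int_residue: "e > 0 \<Longrightarrow> residue e (y + int (residue e x)) = residue e (y + x)"
  by (intro residue_cong cong_add cong_refl cong_int_residue)

lemma residue_inverse_shift:
  fixes d1 d2 d2' x y z :: int
  assumes "e > 0" and "[d2 * d2' = 1] (mod int e)"
  shows "residue e (d2 * int (residue e ((- d2' * d1) * x + y)) + d1 * x + z) = residue e (d2 * y + z)"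
proof (rule residue_cong)
  have "[d2 * int (residue e ((- d2' * d1) * x + y)) + d1 * x + z
         = d2 * ((- d2' * d1) * x + y) + d1 * x + z] (mod int e)"
    by (intro cong_add cong_mult cong_refl cong_int_residue assms(1))
  also have "d2 * ((- d2' * d1) * x + y) + d1 * x + z = d2 * y + z + (1 - d2 * d2') * (d1 * x)"
    by (simp add: algebra_simps)
  also have "[\<dots> = d2 * y + z + (1 - 1) * (d1 * x)] (mod int e)"
    by (intro cong_add cong_mult cong_diff cong_refl assms(2))
  finally show "[d2 * int (residue e ((- d2' * d1) * x + y)) + d1 * x + z = d2 * y + z] (mod int e)"
    by simp
qed

lemma sum_lessThan_swap_pairs:
  fixes F :: "nat \<Rightarrow> nat \<Rightarrow> nat \<Rightarrow> nat \<Rightarrow> 'a::comm_monoid_add"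
  shows "(\<Sum>p<e. \<Sum>q<e. \<Sum>s<e. \<Sum>t<e. F p q s t) = (\<Sum>s<e. \<Sum>t<e. \<Sum>p<e. \<Sum>q<e. F p q s t)"
proof -
  have "(\<Sum>p<e. \<Sum>q<e. \<Sum>s<e. \<Sum>t<e. F p q s t) = (\<Sum>p<e. \<Sum>s<e. \<Sum>q<e. \<Sum>t<e. F p q s t)"
    by (rule sum.cong[OF refl], rule sum.swap)
  also have "\<dots> = (\<Sum>s<e. \<Sum>p<e. \<Sum>t<e. \<Sum>q<e. F p q s t)"
    by (subst sum.swap) (rule sum.cong[OF refl], rule sum.cong[OF refl], rule sum.swap)
  also have "\<dots> = (\<Sum>s<e. \<Sum>t<e. \<Sum>p<e. \<Sum>q<e. F p q s t)"
    by (rule sum.cong[OF refl], rule sum.swap)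
  finally show ?thesis .
qed

lemma dcomp_dcomp_right_entry:
  assumes "e > 0"
  shows "dcomp e d1 A (dcomp e d2 B C) i j =
    (\<Sum>s<e. \<Sum>t<e. A s t * (\<Sum>u<e. \<Sum>v<e. B u v *
       C (residue e (d2 * int u + d1 * int s + int i)) (residue e (d2 * int v + d1 * int t + int j))))"
  by (simp add: dcomp_eq_residue residue_add_int_residue[OF assms] add.assoc)

lemma dcomp_dcomp_left_entry:
  "dcomp e d2 (dcomp e d A B) C i j =
    (\<Sum>s<e. \<Sum>t<e. A s t * (\<Sum>p<e. \<Sum>q<e.
       B (residue e (d * int s + int p)) (residue e (d * int t + int q)) *
       C (residue e (d2 * int p + int i)) (residue e (d2 * int q + int j))))"
  unfolding dcomp_eq_residue sum_distrib_left sum_distrib_right mult.assoc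
  by (rule sum_lessThan_swap_pairs)

lemma dcomp_assoc_entry:
  fixes A B C :: "nat \<Rightarrow> nat \<Rightarrow> 'a::comm_ring_1"
  assumes e: "e > 0" and inv: "[d2 * d2' = 1] (mod int e)"
  shows "dcomp e d1 A (dcomp e d2 B C) i j = dcomp e d2 (dcomp e (- d2' * d1) A B) C i j"
proof -
  define r where "r = residue e"
  define d where "d = - d2' * d1"
  have "(\<Sum>p<e. \<Sum>q<e. B (r (d * int s + int p)) (r (d * int t + int q)) *
           C (r (d2 * int p + int i)) (r (d2 * int q + int j)))
      = (\<Sum>u<e. \<Sum>v<e. B u v *
           C (r (d2 * int u + d1 * int s + int i)) (r (d2 * int v + d1 * int t + int j)))" for s t
  proof -
    have "(\<Sum>p<e. \<Sum>q<e. B (r (d * int s + int p)) (r (d * int t + int q)) *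
             C (r (d2 * int p + int i)) (r (d2 * int q + int j)))
        = (\<Sum>p<e. \<Sum>q<e. B (r (d * int s + int p)) (r (d * int t + int q)) *
             C (r (d2 * int (r (d * int s + int p)) + d1 * int s + int i))
               (r (d2 * int (r (d * int t + int q)) + d1 * int t + int j)))"
      unfolding r_def d_def residue_inverse_shift[OF e inv] ..
    also have "\<dots> = (\<Sum>u<e. \<Sum>v<e. B u v *
             C (r (d2 * int u + d1 * int s + int i)) (r (d2 * int v + d1 * int t + int j)))"
      unfolding r_def
      by (rule sum_residue_shift2[OF e, where f = "\<lambda>u v. B u v *
            C (residue e (d2 * int u + d1 * int s + int i)) (residue e (d2 * int v + d1 * int t + int j))"])
    finally show ?thesis .
  qed
  then show ?thesis
    unfolding dcomp_dcomp_right_entry[OF e] dcomp_dcomp_left_entry d_def r_def by simp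
qed

lemma mat_eq_dcomp_assoc:
  fixes A B C :: "nat \<Rightarrow> nat \<Rightarrow> 'a::comm_ring_1"
  assumes "e > 0" and "[d2 * d2' = 1] (mod int e)"
  shows "mat_eq e (dcomp e d1 A (dcomp e d2 B C)) (dcomp e d2 (dcomp e (- d2' * d1) A B) C)"
  unfolding mat_eq_def using dcomp_assoc_entry[OF assms] by blast

theorem proposition3p4:
  fixes A B C :: "nat \<Rightarrow> nat \<Rightarrow> 'a::field_char_0"
    and e :: nat and d1 d2 d2inv :: int
  assumes "e \<ge> 2"
    and "coprime d1 (int e)" and "coprime d2 (int e)"
    and "[d2 * d2inv = 1] (mod int e)"
  shows "mat_eq e (dcomp e d1 A (dcomp e d2 B C))
                  (dcomp e d2 (dcomp e (- d2inv * d1) A B) C)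
       \<and> mat_eq e (dcomp e d1 A (dcomp e (-1) B C))
                  (dcomp e (-1) (dcomp e d1 A B) C)
       \<and> mat_eq e (dcomp e (-1) A (dcomp e (-1) B C))
                  (dcomp e (-1) (dcomp e (-1) A B) C)"
proof -
  have e: "e > 0" using assms(1) by simp
  have minus_one_self_inverse: "[(-1) * (-1) = (1::int)] (mod int e)" by simp
  show ?thesis
    using mat_eq_dcomp_assoc[OF e assms(4), of d1 A B C]
      mat_eq_dcomp_assoc[OF e minus_one_self_inverse, of d1 A B C]
      mat_eq_dcomp_assoc[OF e minus_one_self_inverse, of "-1" A B C]
    by simp
qed

end
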